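(* Let $s\ge0$ and $\varepsilon\in(0,1/2)$. Then for every $t\in\mathbb{R}$ the multilinear operator $B_4$ defined in the context maps $(\dot H^s)^4$ into $\dot H^{s+\varepsilon}$ and satisfies $$\|B_4(u,v,w,\varphi)\|_{\dot H^{s+\varepsilon}}\le c_4(s,\varepsilon)\|u\|_{\dot H^s}\|v\|_{\dot H^s}\|w\|_{\dot H^s}\|\varphi\|_{\dot H^s},$$ with a constant $c_4(s,\varepsilon)$ depending only on $s,\varepsilon$.
   Context: Write $\mathbb{Z}_0=\mathbb{Z}\setminus\{0\}$. For $s\in\mathbb{R}$, $\dot H^s$ denotes the Hilbert space of complex sequences $v=(v_k)_{k\in\mathbb{Z}_0}$ with $\|v\|_{\dot H^s}^2=\sum_{k\in\mathbb{Z}_0}|k|^{2s}|v_k|^2<\infty$. Let $\Phi(k_1,k_2,k_3,k_4)=(k_1+k_2+k_3+k_4)^3-k_1^3-k_2^3-k_3^3-k_4^3$. For $t\in\mathbb{R}$ define $B_4=\tfrac12B_4^1+B_4^2$, where for $k\in\mathbb{Z}_0$ $$B_4^1(u,v,w,\varphi)_k=\sum^{\mathrm{nonres}}\frac{e^{i\Phi(k_1,k_2,k_3,k_4)t}}{(k_1+k_2)(k_1+k_3+k_4)(k_2+k_3+k_4)}u_{k_1}v_{k_2}w_{k_3}\varphi_{k_4},$$ $$B_4^2(u,v,w,\varphi)_k=\sum^{\mathrm{nonres}}\frac{e^{i\Phi(k_1,k_2,k_3,k_4)t}(k_3+k_4)}{k_1(k_1+k_2)(k_1+k_3+k_4)(k_2+k_3+k_4)}u_{k_1}v_{k_2}w_{k_3}\varphi_{k_4},$$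 the sums running over $k_1,k_2,k_3,k_4\in\mathbb{Z}_0$ with $k_1+k_2+k_3+k_4=k$ and $(k_1+k_2)(k_1+k_3+k_4)(k_2+k_3+k_4)\ne0$. *)

theory Defs
  imports "HOL-Analysis.Analysis"
begin

text \<open>Sequences indexed by nonzero integers are modelled as functions int => complex;
  the value at index 0 is ignored everywhere.\<close>

definition Z0 :: "int set" where "Z0 = - {0}"

definition Hs_sq :: "real \<Rightarrow> (int \<Rightarrow> complex) \<Rightarrow> real" where
  "Hs_sq s v = (\<Sum>\<^sub>\<infinity>k\<in>Z0. \<bar>real_of_int k\<bar> powr (2 * s) * (cmod (v k))^2)"

definition in_Hs :: "real \<Rightarrow> (int \<Rightarrow> complex) \<Rightarrow> bool" where
  "in_Hs s v \<longleftrightarrow> (\<lambda>k. \<bar>real_of_int k\<bar> powr (2 * s) * (cmod (v k))^2) summable_on Z0"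

definition Hs_norm :: "real \<Rightarrow> (int \<Rightarrow> complex) \<Rightarrow> real" where
  "Hs_norm s v = sqrt (Hs_sq s v)"

definition Phi :: "int \<Rightarrow> int \<Rightarrow> int \<Rightarrow> int \<Rightarrow> int" where
  "Phi k1 k2 k3 k4 = (k1 + k2 + k3 + k4)^3 - k1^3 - k2^3 - k3^3 - k4^3"

definition nonres :: "int \<Rightarrow> (int \<times> int \<times> int \<times> int) set" where
  "nonres k = {(k1, k2, k3, k4). k1 \<noteq> 0 \<and> k2 \<noteq> 0 \<and> k3 \<noteq> 0 \<and> k4 \<noteq> 0 \<and>
      k1 + k2 + k3 + k4 = k \<and> (k1 + k2) * (k1 + k3 + k4) * (k2 + k3 + k4) \<noteq> 0}"

definition B41_term :: "real \<Rightarrow> (int \<Rightarrow> complex) \<Rightarrow> (int \<Rightarrow> complex) \<Rightarrow> (int \<Rightarrow> complex)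
    \<Rightarrow> (int \<Rightarrow> complex) \<Rightarrow> int \<times> int \<times> int \<times> int \<Rightarrow> complex" where
  "B41_term t u v w \<phi> = (\<lambda>(k1, k2, k3, k4).
     exp (\<i> * of_real (real_of_int (Phi k1 k2 k3 k4) * t))
     / of_int ((k1 + k2) * (k1 + k3 + k4) * (k2 + k3 + k4))
     * u k1 * v k2 * w k3 * \<phi> k4)"

definition B42_term :: "real \<Rightarrow> (int \<Rightarrow> complex) \<Rightarrow> (int \<Rightarrow> complex) \<Rightarrow> (int \<Rightarrow> complex)
    \<Rightarrow> (int \<Rightarrow> complex) \<Rightarrow> int \<times> int \<times> int \<times> int \<Rightarrow> complex" where
  "B42_term t u v w \<phi> = (\<lambda>(k1, k2, k3, k4).
     exp (\<i> * of_real (real_of_int (Phi k1 k2 k3 k4) * t)) * of_int (k3 + k4)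
     / of_int (k1 * (k1 + k2) * (k1 + k3 + k4) * (k2 + k3 + k4))
     * u k1 * v k2 * w k3 * \<phi> k4)"

definition B41 :: "real \<Rightarrow> (int \<Rightarrow> complex) \<Rightarrow> (int \<Rightarrow> complex) \<Rightarrow> (int \<Rightarrow> complex)
    \<Rightarrow> (int \<Rightarrow> complex) \<Rightarrow> int \<Rightarrow> complex" where
  "B41 t u v w \<phi> k = (\<Sum>\<^sub>\<infinity>q\<in>nonres k. B41_term t u v w \<phi> q)"

definition B42 :: "real \<Rightarrow> (int \<Rightarrow> complex) \<Rightarrow> (int \<Rightarrow> complex) \<Rightarrow> (int \<Rightarrow> complex)
    \<Rightarrow> (int \<Rightarrow> complex) \<Rightarrow> int \<Rightarrow> complex" where
  "B42 t u v w \<phi> k = (\<Sum>\<^sub>\<infinity>q\<in>nonres k. B42_term t u v w \<phi> q)"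

definition B4 :: "real \<Rightarrow> (int \<Rightarrow> complex) \<Rightarrow> (int \<Rightarrow> complex) \<Rightarrow> (int \<Rightarrow> complex)
    \<Rightarrow> (int \<Rightarrow> complex) \<Rightarrow> int \<Rightarrow> complex" where
  "B4 t u v w \<phi> k = B41 t u v w \<phi> k / 2 + B42 t u v w \<phi> k"

end

theory Submission
  imports Defs
begin

(*
  Write a_n = |n|^s |u_n| (and likewise for v, w, \<phi>) and, for a nonresonant quadruple with sum k,
  X = k1 + k2, Y = k1 + k3 + k4, Z = k2 + k3 + k4. Since |k|^s \<le> 4^s |k1 k2 k3 k4|^s and
  k3 + k4 = Y - k1, both summands of B4 are dominated by (1/|XYZ| + 1/|k1 X Z|) |u_k1 v_k2 w_k3 \<phi>_k4|.
  Cauchy-Schwarz over the quadruples with sum k separates a_k1 a_k2 a_k4, whose squares sum to at most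
  ||u||^2 ||v||^2 ||\<phi>||^2 because (k1, k2, k4) determines the quadruple once k is fixed, from
  |k|^\<epsilon> (1/|XYZ| + 1/|k1 X Z|) a_k3. Summing the square of the latter over k runs over all
  nonresonant quadruples; as |k|^(2\<epsilon>) is at most 2 |XYZ|^(2\<epsilon>) and at most 2 |k1 X Z|^(2\<epsilon>), the
  injective changes of variables to (k3, X, Y, Z) and (k3, k1, X, Z) bound it by
  ||w||^2 (\<Sum>n\<noteq>0. |n|^(2\<epsilon>-2))^3, which is finite exactly because \<epsilon> < 1/2.
*)

section \<open>Nonnegative infinite sums\<close>

lemma nonneg_summable_on_infsum_le:
  fixes f :: "'a \<Rightarrow> real"
  assumes "\<And>x. x \<in> A \<Longrightarrow> 0 \<le> f x"
    and "\<And>F. finite F \<Longrightarrow> F \<subseteq> A \<Longrightarrow> sum f F \<le> C"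
  shows "f summable_on A" and "infsum f A \<le> C"
proof -
  show "f summable_on A"
    using assms by (intro nonneg_bdd_above_summable_on bdd_aboveI[where M = C]) auto
  then show "infsum f A \<le> C"
    using assms(2) by (rule infsum_le_finite_sums)
qed

lemma summable_on_infsum_le_reindex:
  fixes f :: "'a \<Rightarrow> real" and g :: "'b \<Rightarrow> real"
  assumes g: "g summable_on S" "\<And>y. y \<in> S \<Longrightarrow> 0 \<le> g y"
    and h: "inj_on h A" "h ` A \<subseteq> S"
    and f: "\<And>x. x \<in> A \<Longrightarrow> 0 \<le> f x" "\<And>x. x \<in> A \<Longrightarrow> f x \<le> g (h x)"
  shows "f summable_on A" and "infsum f A \<le> infsum g S"
proof -
  have "sum f F \<le> infsum g S" if F: "finite F" "F \<subseteq> A" for F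
  proof -
    have "sum f F \<le> sum (g \<circ> h) F"
      using F(2) f(2) by (intro sum_mono) (simp add: subset_iff)
    also have "\<dots> = sum g (h ` F)"
      using inj_on_subset[OF h(1) F(2)] by (simp add: sum.reindex)
    also have "\<dots> \<le> infsum g S"
      using F h(2) g by (intro finite_sum_le_infsum) blast+
    finally show ?thesis .
  qed
  then show "f summable_on A" and "infsum f A \<le> infsum g S"
    using nonneg_summable_on_infsum_le[of A f "infsum g S"] f(1) by auto
qed

lemma summable_on_times_infsum_le:
  fixes f g :: "_ \<Rightarrow> real"
  assumes f: "f summable_on A" "\<And>x. x \<in> A \<Longrightarrow> 0 \<le> f x"
    and g: "g summable_on B" "\<And>y. y \<in> B \<Longrightarrow> 0 \<le> g y"
  shows "(\<lambda>(x, y). f x * g y) summable_on A \<times> B"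
    and "(\<Sum>\<^sub>\<infinity>(x, y)\<in>A \<times> B. f x * g y) \<le> infsum f A * infsum g B"
proof -
  have nonneg: "0 \<le> (\<lambda>(x, y). f x * g y) p" if "p \<in> A \<times> B" for p
    using that f(2) g(2) by (auto intro: mult_nonneg_nonneg)
  have "(\<Sum>(x, y)\<in>F. f x * g y) \<le> infsum f A * infsum g B"
    if F: "finite F" "F \<subseteq> A \<times> B" for F
  proof -
    have sub: "fst ` F \<subseteq> A" "snd ` F \<subseteq> B" using F(2) by auto
    have "(\<Sum>(x, y)\<in>F. f x * g y) \<le> (\<Sum>(x, y)\<in>fst ` F \<times> snd ` F. f x * g y)"
    proof (rule sum_mono2)
      show "F \<subseteq> fst ` F \<times> snd ` F" by force
      show "0 \<le> (\<lambda>(x, y). f x * g y) p" if "p \<in> fst ` F \<times> snd ` F - F" for p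
        using that sub by (intro nonneg) blast
    qed (use F in simp)
    also have "\<dots> = sum f (fst ` F) * sum g (snd ` F)"
      by (simp add: sum_product sum.cartesian_product)
    also have "\<dots> \<le> infsum f A * infsum g B"
    proof (rule mult_mono)
      show "sum f (fst ` F) \<le> infsum f A"
        using F sub f by (intro finite_sum_le_infsum) blast+
      show "sum g (snd ` F) \<le> infsum g B"
        using F sub g by (intro finite_sum_le_infsum) blast+
      show "0 \<le> infsum f A" using f(2) by (rule infsum_nonneg)
      show "0 \<le> sum g (snd ` F)" using sub g(2) by (intro sum_nonneg) blast
    qed
    finally show ?thesis .
  qed
  then show "(\<lambda>(x, y). f x * g y) summable_on A \<times> B"
    and "(\<Sum>\<^sub>\<infinity>(x, y)\<in>A \<times> B. f x * g y) \<le> infsum f A * infsum g B"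
    using nonneg_summable_on_infsum_le[of "A \<times> B" "\<lambda>(x, y). f x * g y"] nonneg by blast+
qed

lemma summable_on_times3_infsum_le:
  fixes f g h :: "_ \<Rightarrow> real"
  assumes f: "f summable_on A" "\<And>x. x \<in> A \<Longrightarrow> 0 \<le> f x"
    and g: "g summable_on B" "\<And>y. y \<in> B \<Longrightarrow> 0 \<le> g y"
    and h: "h summable_on C" "\<And>z. z \<in> C \<Longrightarrow> 0 \<le> h z"
  shows "(\<lambda>(x, y, z). f x * g y * h z) summable_on A \<times> B \<times> C"
    and "(\<Sum>\<^sub>\<infinity>(x, y, z)\<in>A \<times> B \<times> C. f x * g y * h z) \<le> infsum f A * infsum g B * infsum h C"
proof -
  let ?gh = "\<lambda>(y, z). g y * h z"
  have gh: "?gh summable_on B \<times> C" "infsum ?gh (B \<times> C) \<le> infsum g B * infsum h C"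
    using summable_on_times_infsum_le[OF g h] by simp_all
  have gh_nonneg: "0 \<le> ?gh p" if "p \<in> B \<times> C" for p
    using that g(2) h(2) by (auto intro: mult_nonneg_nonneg)
  have eq: "(\<lambda>(x, y, z). f x * g y * h z) = (\<lambda>(x, p). f x * ?gh p)"
    by (simp add: fun_eq_iff split_def mult.assoc)
  show "(\<lambda>(x, y, z). f x * g y * h z) summable_on A \<times> B \<times> C"
    unfolding eq by (rule summable_on_times_infsum_le(1)[OF f gh(1) gh_nonneg])
  have "(\<Sum>\<^sub>\<infinity>(x, p)\<in>A \<times> B \<times> C. f x * ?gh p) \<le> infsum f A * infsum ?gh (B \<times> C)"
    by (rule summable_on_times_infsum_le(2)[OF f gh(1) gh_nonneg])
  also have "\<dots> \<le> infsum f A * (infsum g B * infsum h C)"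
    using gh(2) f by (intro mult_left_mono infsum_nonneg) simp_all
  finally show "(\<Sum>\<^sub>\<infinity>(x, y, z)\<in>A \<times> B \<times> C. f x * g y * h z) \<le> infsum f A * infsum g B * infsum h C"
    unfolding eq by (simp add: mult.assoc)
qed

lemma infsum_Cauchy_Schwarz:
  fixes f g :: "_ \<Rightarrow> real"
  assumes f: "(\<lambda>x. (f x)\<^sup>2) summable_on A" "\<And>x. x \<in> A \<Longrightarrow> 0 \<le> f x"
    and g: "(\<lambda>x. (g x)\<^sup>2) summable_on A" "\<And>x. x \<in> A \<Longrightarrow> 0 \<le> g x"
  shows "(\<lambda>x. f x * g x) summable_on A"
    and "(\<Sum>\<^sub>\<infinity>x\<in>A. f x * g x) \<le> sqrt ((\<Sum>\<^sub>\<infinity>x\<in>A. (f x)\<^sup>2) * (\<Sum>\<^sub>\<infinity>x\<in>A. (g x)\<^sup>2))"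
proof -
  let ?C = "sqrt ((\<Sum>\<^sub>\<infinity>x\<in>A. (f x)\<^sup>2) * (\<Sum>\<^sub>\<infinity>x\<in>A. (g x)\<^sup>2))"
  have "(\<Sum>x\<in>F. f x * g x) \<le> ?C" if F: "finite F" "F \<subseteq> A" for F
  proof (rule real_le_rsqrt)
    have "(\<Sum>x\<in>F. f x * g x)\<^sup>2 \<le> (\<Sum>x\<in>F. (f x)\<^sup>2) * (\<Sum>x\<in>F. (g x)\<^sup>2)"
      by (rule Cauchy_Schwarz_ineq_sum)
    also have "\<dots> \<le> (\<Sum>\<^sub>\<infinity>x\<in>A. (f x)\<^sup>2) * (\<Sum>\<^sub>\<infinity>x\<in>A. (g x)\<^sup>2)"
    proof (rule mult_mono)
      show "(\<Sum>x\<in>F. (f x)\<^sup>2) \<le> (\<Sum>\<^sub>\<infinity>x\<in>A. (f x)\<^sup>2)"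
        using f(1) F by (rule finite_sum_le_infsum) simp
      show "(\<Sum>x\<in>F. (g x)\<^sup>2) \<le> (\<Sum>\<^sub>\<infinity>x\<in>A. (g x)\<^sup>2)"
        using g(1) F by (rule finite_sum_le_infsum) simp
    qed (simp_all add: infsum_nonneg sum_nonneg)
    finally show "(\<Sum>x\<in>F. f x * g x)\<^sup>2 \<le> (\<Sum>\<^sub>\<infinity>x\<in>A. (f x)\<^sup>2) * (\<Sum>\<^sub>\<infinity>x\<in>A. (g x)\<^sup>2)" .
  qed
  moreover have "0 \<le> f x * g x" if "x \<in> A" for x
    using f(2)[OF that] g(2)[OF that] by simp
  ultimately show "(\<lambda>x. f x * g x) summable_on A" and "(\<Sum>\<^sub>\<infinity>x\<in>A. f x * g x) \<le> ?C"
    using nonneg_summable_on_infsum_le[of A "\<lambda>x. f x * g x" ?C] by blast+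
qed

lemma summable_on_infsum_disjoint_family_le:
  fixes f :: "'a \<Rightarrow> real"
  assumes f: "f summable_on A" "\<And>x. x \<in> A \<Longrightarrow> 0 \<le> f x"
    and S: "\<And>k. k \<in> K \<Longrightarrow> S k \<subseteq> A" "disjoint_family_on S K"
  shows "(\<lambda>k. infsum f (S k)) summable_on K"
    and "(\<Sum>\<^sub>\<infinity>k\<in>K. infsum f (S k)) \<le> infsum f A"
proof -
  have "(\<Sum>k\<in>F. infsum f (S k)) \<le> infsum f A" if F: "finite F" "F \<subseteq> K" for F
  proof -
    have U: "(\<Union>k\<in>F. S k) \<subseteq> A" using F(2) S(1) by blast
    have "(\<Sum>k\<in>F. infsum f (S k)) = infsum f (\<Union>k\<in>F. S k)"
    proof (rule sum_infsum[OF F(1)])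
      show "f summable_on S k" if "k \<in> F" for k
        using that F(2) S(1) by (intro summable_on_subset_banach[OF f(1)]) blast
      show "S k \<inter> S k' = {}" if "k \<in> F" "k' \<in> F" "k \<noteq> k'" for k k'
        using that F(2) by (intro disjoint_family_onD[OF S(2)]) blast+
    qed
    also have "\<dots> \<le> infsum f A"
      using U f(2) by (intro infsum_mono2 summable_on_subset_banach[OF f(1)] f(1)) blast+
    finally show ?thesis .
  qed
  moreover have "0 \<le> infsum f (S k)" if "k \<in> K" for k
    using that S(1) f(2) by (intro infsum_nonneg) blast
  ultimately show "(\<lambda>k. infsum f (S k)) summable_on K"
    and "(\<Sum>\<^sub>\<infinity>k\<in>K. infsum f (S k)) \<le> infsum f A"
    using nonneg_summable_on_infsum_le[of K "\<lambda>k. infsum f (S k)" "infsum f A"] by blast+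
qed

lemma summable_on_norm_infsum_le_majorant:
  fixes F :: "'a \<Rightarrow> 'b::banach"
  assumes M: "M summable_on A" and le: "\<And>x. x \<in> A \<Longrightarrow> norm (F x) \<le> M x"
  shows "F summable_on A" and "norm (infsum F A) \<le> infsum M A"
proof -
  have abs: "F abs_summable_on A"
    using M le by (rule summable_on_comparison_test) simp_all
  then show "F summable_on A"
    by (rule abs_summable_summable)
  have "norm (infsum F A) \<le> (\<Sum>\<^sub>\<infinity>x\<in>A. norm (F x))"
    using abs by (rule norm_infsum_bound)
  also have "\<dots> \<le> infsum M A"
    using abs M le by (rule infsum_mono)
  finally show "norm (infsum F A) \<le> infsum M A" .
qed

lemma summable_on_Z0_abs_powr:
  assumes "a < -1"
  shows "(\<lambda>n. \<bar>real_of_int n\<bar> powr a) summable_on Z0"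
proof -
  let ?g = "\<lambda>n::int. \<bar>real_of_int n\<bar> powr a"
  have "(\<lambda>n. real n powr a) summable_on UNIV"
    using assms by (simp add: summable_on_UNIV_nonneg_real_iff summable_real_powr_iff)
  then have "(?g \<circ> int) summable_on UNIV" "(?g \<circ> (uminus \<circ> int)) summable_on UNIV"
    by (simp_all add: comp_def)
  moreover have "inj int" "inj (uminus \<circ> int)"
    by (simp_all add: inj_on_def)
  ultimately have "?g summable_on range int" "?g summable_on range (uminus \<circ> int)"
    using summable_on_reindex by blast+
  then have "?g summable_on (range int \<union> range (uminus \<circ> int))"
    by (rule summable_on_union)
  moreover have "Z0 \<subseteq> range int \<union> range (uminus \<circ> int)"
  proof
    fix n :: int
    have "n = int (nat n) \<or> n = - int (nat (- n))" by linarith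
    then show "n \<in> range int \<union> range (uminus \<circ> int)" by (metis UnI1 UnI2 comp_apply rangeI)
  qed
  ultimately show ?thesis
    by (rule summable_on_subset_banach)
qed

lemma add_le_two_mult:
  fixes x y :: "'a::linordered_idom"
  assumes "1 \<le> x" "1 \<le> y"
  shows "x + y \<le> 2 * (x * y)"
proof -
  have "0 \<le> (x - 1) * (y - 1)" using assms by simp
  moreover have "1 \<le> x * y" using assms mult_mono[of 1 x 1 y] by simp
  ultimately show ?thesis by (simp add: algebra_simps)
qed

lemma abs_add3_le_mult:
  fixes x y z :: int
  assumes "x \<noteq> 0" "y \<noteq> 0" "z \<noteq> 0"
  shows "\<bar>x + y + z\<bar> \<le> 4 * \<bar>x * y * z\<bar>"
proof -
  have xy: "\<bar>x\<bar> + \<bar>y\<bar> \<le> 2 * \<bar>x * y\<bar>"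
    using assms add_le_two_mult[of "\<bar>x\<bar>" "\<bar>y\<bar>"] by (simp add: abs_mult)
  have "1 \<le> \<bar>x * y\<bar>" "1 \<le> \<bar>z\<bar>"
    using assms by (simp_all add: int_one_le_iff_zero_less)
  then have "\<bar>x * y\<bar> + \<bar>z\<bar> \<le> 2 * \<bar>x * y * z\<bar>"
    using add_le_two_mult[of "\<bar>x * y\<bar>" "\<bar>z\<bar>"] by (simp add: abs_mult)
  with xy show ?thesis by linarith
qed

lemma abs_add4_le_mult:
  fixes k1 k2 k3 k4 :: int
  assumes "k1 \<noteq> 0" "k2 \<noteq> 0" "k3 \<noteq> 0" "k4 \<noteq> 0"
  shows "\<bar>k1 + k2 + k3 + k4\<bar> \<le> 4 * \<bar>k1 * k2 * k3 * k4\<bar>"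
proof -
  have pairs: "\<bar>k1\<bar> + \<bar>k2\<bar> \<le> 2 * \<bar>k1 * k2\<bar>" "\<bar>k3\<bar> + \<bar>k4\<bar> \<le> 2 * \<bar>k3 * k4\<bar>"
    using assms add_le_two_mult[of "\<bar>k1\<bar>" "\<bar>k2\<bar>"] add_le_two_mult[of "\<bar>k3\<bar>" "\<bar>k4\<bar>"]
    by (simp_all add: abs_mult)
  have "1 \<le> \<bar>k1 * k2\<bar>" "1 \<le> \<bar>k3 * k4\<bar>"
    using assms by (simp_all add: int_one_le_iff_zero_less)
  then have "\<bar>k1 * k2\<bar> + \<bar>k3 * k4\<bar> \<le> 2 * \<bar>k1 * k2 * k3 * k4\<bar>"
    using add_le_two_mult[of "\<bar>k1 * k2\<bar>" "\<bar>k3 * k4\<bar>"] by (simp add: abs_mult mult.assoc)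
  with pairs show ?thesis by linarith
qed

lemma powr_square: "(x powr a)\<^sup>2 = x powr (2 * a)" for x a :: real
proof -
  have "x powr (2 * a) = x powr a * x powr a"
    by (subst powr_add [symmetric]) simp
  then show ?thesis by (simp add: power2_eq_square)
qed

lemma powr_div_square_le:
  fixes x y z K p :: real
  assumes "x \<noteq> 0" "y \<noteq> 0" "z \<noteq> 0" "\<bar>K\<bar> \<le> 2 * \<bar>x * y * z\<bar>" "0 \<le> p" "p \<le> 1"
  shows "\<bar>K\<bar> powr p / (x * y * z)\<^sup>2 \<le> 2 * (\<bar>x\<bar> powr (p - 2) * \<bar>y\<bar> powr (p - 2) * \<bar>z\<bar> powr (p - 2))"
proof -
  define m where "m = \<bar>x * y * z\<bar>"
  have m: "0 < m" using assms(1-3) by (simp add: m_def)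
  have "\<bar>K\<bar> powr p \<le> (2 * m) powr p"
    using assms(4,5) by (intro powr_mono2) (simp_all add: m_def)
  also have "\<dots> = 2 powr p * m powr p"
    using m by (simp add: powr_mult)
  also have "\<dots> \<le> 2 * m powr p"
  proof (rule mult_right_mono)
    show "(2::real) powr p \<le> 2" using powr_mono[OF assms(6), of 2] by simp
  qed simp
  finally have "\<bar>K\<bar> powr p / m powr 2 \<le> 2 * m powr p / m powr 2"
    using m by (simp add: divide_right_mono)
  also have "\<dots> = 2 * m powr (p - 2)"
    using m by (simp add: powr_diff)
  also have "m powr (p - 2) = \<bar>x\<bar> powr (p - 2) * \<bar>y\<bar> powr (p - 2) * \<bar>z\<bar> powr (p - 2)"
    by (simp add: m_def abs_mult powr_mult)
  also have "m powr 2 = (x * y * z)\<^sup>2"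
    using m by (simp add: m_def powr_numeral)
  finally show ?thesis .
qed

section \<open>The multipliers\<close>

(* The B42 multiplier (k3 + k4)/(k1 X Y Z) equals 1/(k1 X Z) - 1/(X Y Z); mB and mA are the moduli of
   the two pieces, and mA is also the modulus of the B41 multiplier. *)
definition mA :: "int \<times> int \<times> int \<times> int \<Rightarrow> real" where
  "mA = (\<lambda>(k1, k2, k3, k4). 1 / \<bar>real_of_int ((k1 + k2) * (k1 + k3 + k4) * (k2 + k3 + k4))\<bar>)"

definition mB :: "int \<times> int \<times> int \<times> int \<Rightarrow> real" where
  "mB = (\<lambda>(k1, k2, k3, k4). 1 / \<bar>real_of_int (k1 * (k1 + k2) * (k2 + k3 + k4))\<bar>)"

definition amplitude :: "(int \<Rightarrow> complex) \<Rightarrow> (int \<Rightarrow> complex) \<Rightarrow> (int \<Rightarrow> complex)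
    \<Rightarrow> (int \<Rightarrow> complex) \<Rightarrow> int \<times> int \<times> int \<times> int \<Rightarrow> real" where
  "amplitude u v w \<phi> = (\<lambda>(k1, k2, k3, k4). cmod (u k1) * cmod (v k2) * cmod (w k3) * cmod (\<phi> k4))"

lemma norm_B41_term: "cmod (B41_term t u v w \<phi> q) = mA q * amplitude u v w \<phi> q"
  by (cases q) (simp add: B41_term_def mA_def amplitude_def norm_mult norm_divide norm_of_int
      del: of_int_add of_int_mult)

lemma norm_B42_term_le:
  assumes "q \<in> nonres k"
  shows "cmod (B42_term t u v w \<phi> q) \<le> (mA q + mB q) * amplitude u v w \<phi> q"
proof -
  obtain k1 k2 k3 k4 where q: "q = (k1, k2, k3, k4)" by (cases q)
  define a where "a = real_of_int k1"
  define x where "x = real_of_int (k1 + k2)"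
  define y where "y = real_of_int (k1 + k3 + k4)"
  define z where "z = real_of_int (k2 + k3 + k4)"
  have nz: "a \<noteq> 0" "x \<noteq> 0" "y \<noteq> 0" "z \<noteq> 0"
    using assms by (auto simp: q nonres_def a_def x_def y_def z_def)
  have "real_of_int (k3 + k4) = y - a" "real_of_int (k1 * (k1 + k2) * (k1 + k3 + k4) * (k2 + k3 + k4)) = a * x * y * z"
    by (simp_all add: a_def y_def x_def z_def)
  then have "cmod (B42_term t u v w \<phi> q) = \<bar>(y - a) / (a * x * y * z)\<bar> * amplitude u v w \<phi> q"
    by (simp add: q B42_term_def amplitude_def norm_mult norm_divide norm_of_int del: of_int_add of_int_mult)
  also have "(y - a) / (a * x * y * z) = 1 / (a * x * z) - 1 / (x * y * z)"
    using nz by (simp add: field_simps)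
  also have "\<bar>1 / (a * x * z) - 1 / (x * y * z)\<bar> \<le> mA q + mB q"
  proof -
    have "mA q = \<bar>1 / (x * y * z)\<bar>" "mB q = \<bar>1 / (a * x * z)\<bar>"
      by (simp_all add: q mA_def mB_def a_def x_def y_def z_def del: of_int_add)
    then show ?thesis using abs_triangle_ineq4[of "1 / (a * x * z)" "1 / (x * y * z)"] by simp
  qed
  then have "\<bar>1 / (a * x * z) - 1 / (x * y * z)\<bar> * amplitude u v w \<phi> q \<le> (mA q + mB q) * amplitude u v w \<phi> q"
    by (rule mult_right_mono) (simp add: q amplitude_def)
  finally show ?thesis .
qed

lemma mA_sq_le:
  fixes k1 k2 k3 k4 :: int
  assumes "k1 + k2 \<noteq> 0" "k1 + k3 + k4 \<noteq> 0" "k2 + k3 + k4 \<noteq> 0" "0 \<le> p" "p \<le> 1"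
  shows "\<bar>real_of_int (k1 + k2 + k3 + k4)\<bar> powr p * (mA (k1, k2, k3, k4))\<^sup>2
    \<le> 2 * (\<bar>real_of_int (k1 + k2)\<bar> powr (p - 2) * \<bar>real_of_int (k1 + k3 + k4)\<bar> powr (p - 2)
        * \<bar>real_of_int (k2 + k3 + k4)\<bar> powr (p - 2))"
proof -
  have "\<bar>2 * (k1 + k2 + k3 + k4)\<bar> \<le> 4 * \<bar>(k1 + k2) * (k1 + k3 + k4) * (k2 + k3 + k4)\<bar>"
    using abs_add3_le_mult[OF assms(1-3)] by (simp add: algebra_simps)
  then have "\<bar>k1 + k2 + k3 + k4\<bar> \<le> 2 * \<bar>(k1 + k2) * (k1 + k3 + k4) * (k2 + k3 + k4)\<bar>"
    by (simp add: abs_mult)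
  then have "real_of_int \<bar>k1 + k2 + k3 + k4\<bar>
      \<le> real_of_int (2 * \<bar>(k1 + k2) * (k1 + k3 + k4) * (k2 + k3 + k4)\<bar>)"
    by (simp only: of_int_le_iff)
  then have "\<bar>real_of_int (k1 + k2 + k3 + k4)\<bar>
      \<le> 2 * \<bar>real_of_int (k1 + k2) * real_of_int (k1 + k3 + k4) * real_of_int (k2 + k3 + k4)\<bar>"
    by (simp add: abs_mult del: of_int_add)
  from powr_div_square_le[OF _ _ _ this assms(4,5)] assms(1-3)
  have "\<bar>real_of_int (k1 + k2 + k3 + k4)\<bar> powr p
      / (real_of_int (k1 + k2) * real_of_int (k1 + k3 + k4) * real_of_int (k2 + k3 + k4))\<^sup>2
    \<le> 2 * (\<bar>real_of_int (k1 + k2)\<bar> powr (p - 2) * \<bar>real_of_int (k1 + k3 + k4)\<bar> powr (p - 2)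
        * \<bar>real_of_int (k2 + k3 + k4)\<bar> powr (p - 2))"
    by simp
  moreover have "(mA (k1, k2, k3, k4))\<^sup>2
      = 1 / (real_of_int (k1 + k2) * real_of_int (k1 + k3 + k4) * real_of_int (k2 + k3 + k4))\<^sup>2"
    by (simp add: mA_def power_divide del: of_int_add)
  ultimately show ?thesis by simp
qed

lemma mB_sq_le:
  fixes k1 k2 k3 k4 :: int
  assumes "k1 \<noteq> 0" "k1 + k2 \<noteq> 0" "k2 + k3 + k4 \<noteq> 0" "0 \<le> p" "p \<le> 1"
  shows "\<bar>real_of_int (k1 + k2 + k3 + k4)\<bar> powr p * (mB (k1, k2, k3, k4))\<^sup>2
    \<le> 2 * (\<bar>real_of_int k1\<bar> powr (p - 2) * \<bar>real_of_int (k1 + k2)\<bar> powr (p - 2)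
        * \<bar>real_of_int (k2 + k3 + k4)\<bar> powr (p - 2))"
proof -
  have "\<bar>k1\<bar> + \<bar>k2 + k3 + k4\<bar> \<le> 2 * \<bar>k1 * (k2 + k3 + k4)\<bar>"
    using assms(1,3) add_le_two_mult[of "\<bar>k1\<bar>" "\<bar>k2 + k3 + k4\<bar>"]
    by (simp add: abs_mult int_one_le_iff_zero_less)
  then have "\<bar>k1 + (k2 + k3 + k4)\<bar> \<le> 2 * \<bar>k1 * (k2 + k3 + k4)\<bar>"
    using abs_triangle_ineq[of k1 "k2 + k3 + k4"] by linarith
  also have "\<dots> \<le> 2 * \<bar>k1 * (k1 + k2) * (k2 + k3 + k4)\<bar>"
    using assms(2) mult_left_mono[of 1 "\<bar>k1 + k2\<bar>" "\<bar>k1 * (k2 + k3 + k4)\<bar>"]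
    by (simp add: abs_mult int_one_le_iff_zero_less ac_simps)
  finally have "real_of_int \<bar>k1 + k2 + k3 + k4\<bar>
      \<le> real_of_int (2 * \<bar>k1 * (k1 + k2) * (k2 + k3 + k4)\<bar>)"
    by (simp only: of_int_le_iff add.assoc)
  then have "\<bar>real_of_int (k1 + k2 + k3 + k4)\<bar>
      \<le> 2 * \<bar>real_of_int k1 * real_of_int (k1 + k2) * real_of_int (k2 + k3 + k4)\<bar>"
    by (simp add: abs_mult del: of_int_add)
  from powr_div_square_le[OF _ _ _ this assms(4,5)] assms(1-3)
  have "\<bar>real_of_int (k1 + k2 + k3 + k4)\<bar> powr p
      / (real_of_int k1 * real_of_int (k1 + k2) * real_of_int (k2 + k3 + k4))\<^sup>2
    \<le> 2 * (\<bar>real_of_int k1\<bar> powr (p - 2) * \<bar>real_of_int (k1 + k2)\<bar> powr (p - 2)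
        * \<bar>real_of_int (k2 + k3 + k4)\<bar> powr (p - 2))"
    by simp
  moreover have "(mB (k1, k2, k3, k4))\<^sup>2
      = 1 / (real_of_int k1 * real_of_int (k1 + k2) * real_of_int (k2 + k3 + k4))\<^sup>2"
    by (simp add: mB_def power_divide del: of_int_add)
  ultimately show ?thesis by simp
qed

section \<open>Splitting the weighted majorant\<close>

definition Hs_weight :: "real \<Rightarrow> (int \<Rightarrow> complex) \<Rightarrow> int \<Rightarrow> real" where
  "Hs_weight s u n = \<bar>real_of_int n\<bar> powr s * cmod (u n)"

lemma Hs_weight_sq: "(Hs_weight s u n)\<^sup>2 = \<bar>real_of_int n\<bar> powr (2 * s) * (cmod (u n))\<^sup>2"
  by (simp add: Hs_weight_def power_mult_distrib powr_square)

lemma in_Hs_iff_Hs_weight: "in_Hs s u \<longleftrightarrow> (\<lambda>n. (Hs_weight s u n)\<^sup>2) summable_on Z0"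
  by (simp add: in_Hs_def Hs_weight_sq)

lemma Hs_sq_eq_Hs_weight: "Hs_sq s u = (\<Sum>\<^sub>\<infinity>n\<in>Z0. (Hs_weight s u n)\<^sup>2)"
  by (simp add: Hs_sq_def Hs_weight_sq)

definition gain_factor :: "real \<Rightarrow> real \<Rightarrow> (int \<Rightarrow> complex) \<Rightarrow> int \<times> int \<times> int \<times> int \<Rightarrow> real" where
  "gain_factor s e w = (\<lambda>(k1, k2, k3, k4). \<bar>real_of_int (k1 + k2 + k3 + k4)\<bar> powr e
      * (mA (k1, k2, k3, k4) + mB (k1, k2, k3, k4)) * Hs_weight s w k3)"

definition data_factor :: "real \<Rightarrow> (int \<Rightarrow> complex) \<Rightarrow> (int \<Rightarrow> complex) \<Rightarrow> (int \<Rightarrow> complex)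
    \<Rightarrow> int \<times> int \<times> int \<times> int \<Rightarrow> real" where
  "data_factor s u v \<phi> = (\<lambda>(k1, k2, k3, k4). Hs_weight s u k1 * Hs_weight s v k2 * Hs_weight s \<phi> k4)"

lemma gain_factor_nonneg: "0 \<le> gain_factor s e w q"
  by (cases q) (simp add: gain_factor_def mA_def mB_def Hs_weight_def)

lemma data_factor_nonneg: "0 \<le> data_factor s u v \<phi> q"
  by (cases q) (simp add: data_factor_def Hs_weight_def)

lemma majorant_le_gain_data_factor:
  assumes "q \<in> nonres k" "0 \<le> s"
  shows "\<bar>real_of_int k\<bar> powr (s + e) * ((mA q + mB q) * amplitude u v w \<phi> q)
    \<le> 4 powr s * (gain_factor s e w q * data_factor s u v \<phi> q)"
proof -
  obtain k1 k2 k3 k4 where q: "q = (k1, k2, k3, k4)" by (cases q)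
  have nz: "k1 \<noteq> 0" "k2 \<noteq> 0" "k3 \<noteq> 0" "k4 \<noteq> 0" and k: "k = k1 + k2 + k3 + k4"
    using assms(1) by (auto simp: q nonres_def)
  define r where "r = (\<lambda>n. \<bar>real_of_int n\<bar>)"
  have "real_of_int \<bar>k\<bar> \<le> real_of_int (4 * \<bar>k1 * k2 * k3 * k4\<bar>)"
    unfolding of_int_le_iff k by (rule abs_add4_le_mult[OF nz])
  then have "r k powr s \<le> (4 * (r k1 * r k2 * r k3 * r k4)) powr s"
    using assms(2) by (intro powr_mono2) (simp_all add: r_def abs_mult)
  also have "\<dots> = 4 powr s * r k1 powr s * r k2 powr s * r k3 powr s * r k4 powr s"
    by (simp add: r_def powr_mult)
  finally have kpow: "r k powr s \<le> 4 powr s * r k1 powr s * r k2 powr s * r k3 powr s * r k4 powr s" .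
  define Z where "Z = r k powr e * (mA q + mB q) * amplitude u v w \<phi> q"
  have "0 \<le> Z"
    by (simp add: Z_def q mA_def mB_def amplitude_def)
  have "\<bar>real_of_int k\<bar> powr (s + e) * ((mA q + mB q) * amplitude u v w \<phi> q) = r k powr s * Z"
    by (simp add: r_def Z_def powr_add)
  also have "\<dots> \<le> (4 powr s * r k1 powr s * r k2 powr s * r k3 powr s * r k4 powr s) * Z"
    using kpow \<open>0 \<le> Z\<close> by (rule mult_right_mono)
  also have "\<dots> = 4 powr s * (gain_factor s e w q * data_factor s u v \<phi> q)"
    by (simp add: Z_def q k r_def gain_factor_def data_factor_def Hs_weight_def amplitude_def
        del: of_int_add)
  finally show ?thesis .
qed

lemma data_factor_sq_summable:
  assumes "in_Hs s u" "in_Hs s v" "in_Hs s \<phi>"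
  shows "(\<lambda>q. (data_factor s u v \<phi> q)\<^sup>2) summable_on nonres k"
    and "(\<Sum>\<^sub>\<infinity>q\<in>nonres k. (data_factor s u v \<phi> q)\<^sup>2) \<le> Hs_sq s u * Hs_sq s v * Hs_sq s \<phi>"
proof -
  let ?W = "\<lambda>u n. (Hs_weight s u n)\<^sup>2"
  let ?g = "\<lambda>(a, b, c). ?W u a * ?W v b * ?W \<phi> c"
  let ?\<rho> = "\<lambda>(k1, k2, k3, k4). (k1, k2, k4)"
  have g: "?g summable_on Z0 \<times> Z0 \<times> Z0" "infsum ?g (Z0 \<times> Z0 \<times> Z0) \<le> Hs_sq s u * Hs_sq s v * Hs_sq s \<phi>"
    using summable_on_times3_infsum_le[of "?W u" Z0 "?W v" Z0 "?W \<phi>" Z0] assms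
    by (simp_all add: in_Hs_iff_Hs_weight Hs_sq_eq_Hs_weight)
  have inj: "inj_on ?\<rho> (nonres k)"
    by (auto simp: inj_on_def nonres_def)
  have img: "?\<rho> ` nonres k \<subseteq> Z0 \<times> Z0 \<times> Z0"
    by (auto simp: nonres_def Z0_def)
  have g_nonneg: "0 \<le> ?g p" for p
    by (simp add: split_def)
  have le: "(data_factor s u v \<phi> q)\<^sup>2 \<le> ?g (?\<rho> q)" for q
    by (cases q) (simp add: data_factor_def power_mult_distrib)
  note reindex = summable_on_infsum_le_reindex[OF g(1) g_nonneg inj img _ le]
  show "(\<lambda>q. (data_factor s u v \<phi> q)\<^sup>2) summable_on nonres k"
    by (rule reindex(1)) simp
  show "(\<Sum>\<^sub>\<infinity>q\<in>nonres k. (data_factor s u v \<phi> q)\<^sup>2) \<le> Hs_sq s u * Hs_sq s v * Hs_sq s \<phi>"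
    using reindex(2) g(2) by fastforce
qed

section \<open>Summing over all nonresonant quadruples\<close>

definition Z0_powr_sum :: "real \<Rightarrow> real" where
  "Z0_powr_sum a = (\<Sum>\<^sub>\<infinity>n\<in>Z0. \<bar>real_of_int n\<bar> powr a)"

lemma summable_on_Hs_weight_times_triple:
  fixes f :: "'q \<Rightarrow> real" and j :: "'q \<Rightarrow> int" and \<rho> :: "'q \<Rightarrow> int \<times> int \<times> int"
  assumes w: "in_Hs s w" and e: "0 < e" "e < 1/2"
    and inj: "inj_on (\<lambda>q. (j q, \<rho> q)) Q" and img: "j ` Q \<subseteq> Z0" "\<rho> ` Q \<subseteq> Z0 \<times> Z0 \<times> Z0"
    and f: "\<And>q. q \<in> Q \<Longrightarrow> 0 \<le> f q"
      "\<And>q. q \<in> Q \<Longrightarrow> f q \<le> 2 * (case \<rho> q of (a, b, c) \<Rightarrow>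
          \<bar>real_of_int a\<bar> powr (2 * e - 2) * \<bar>real_of_int b\<bar> powr (2 * e - 2) * \<bar>real_of_int c\<bar> powr (2 * e - 2))"
  shows "(\<lambda>q. f q * (Hs_weight s w (j q))\<^sup>2) summable_on Q"
    and "(\<Sum>\<^sub>\<infinity>q\<in>Q. f q * (Hs_weight s w (j q))\<^sup>2) \<le> 2 * Hs_sq s w * (Z0_powr_sum (2 * e - 2))^3"
proof -
  let ?h = "\<lambda>n::int. \<bar>real_of_int n\<bar> powr (2 * e - 2)"
  let ?P = "\<lambda>(a, b, c). ?h a * ?h b * ?h c"
  let ?W = "\<lambda>n. (Hs_weight s w n)\<^sup>2"
  let ?g = "\<lambda>(n, p). ?W n * (2 * ?P p)"
  have h: "?h summable_on Z0"
    using e by (intro summable_on_Z0_abs_powr) simp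
  note P = summable_on_times3_infsum_le[OF h _ h _ h, simplified]
  have P2: "(\<lambda>p. 2 * ?P p) summable_on Z0 \<times> Z0 \<times> Z0"
    "(\<Sum>\<^sub>\<infinity>p\<in>Z0 \<times> Z0 \<times> Z0. 2 * ?P p) \<le> 2 * (Z0_powr_sum (2 * e - 2))^3"
    using P by (simp_all add: summable_on_cmult_right infsum_cmult_right' Z0_powr_sum_def power3_eq_cube)
  have P2_nonneg: "0 \<le> 2 * ?P p" for p
    by (simp add: split_def)
  note g = summable_on_times_infsum_le[OF w[unfolded in_Hs_iff_Hs_weight] _ P2(1) P2_nonneg, simplified]
  have g_le: "infsum ?g (Z0 \<times> Z0 \<times> Z0 \<times> Z0) \<le> 2 * Hs_sq s w * (Z0_powr_sum (2 * e - 2))^3"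
  proof -
    have "infsum ?g (Z0 \<times> Z0 \<times> Z0 \<times> Z0) \<le> Hs_sq s w * (\<Sum>\<^sub>\<infinity>p\<in>Z0 \<times> Z0 \<times> Z0. 2 * ?P p)"
      using g(2) by (simp add: Hs_sq_eq_Hs_weight)
    also have "\<dots> \<le> Hs_sq s w * (2 * (Z0_powr_sum (2 * e - 2))^3)"
      by (intro mult_left_mono P2(2)) (simp add: Hs_sq_def infsum_nonneg)
    finally show ?thesis by simp
  qed
  have img': "(\<lambda>q. (j q, \<rho> q)) ` Q \<subseteq> Z0 \<times> Z0 \<times> Z0 \<times> Z0"
    using img by blast
  have le: "f q * ?W (j q) \<le> ?g (j q, \<rho> q)" if "q \<in> Q" for q
    using mult_right_mono[OF f(2)[OF that], of "?W (j q)"] by (simp add: split_def mult.commute)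
  note reindex = summable_on_infsum_le_reindex[OF g(1) _ inj img' _ le]
  show "(\<lambda>q. f q * ?W (j q)) summable_on Q"
    using f(1) by (intro reindex(1)) (simp_all add: split_def)
  have "(\<Sum>\<^sub>\<infinity>q\<in>Q. f q * ?W (j q)) \<le> infsum ?g (Z0 \<times> Z0 \<times> Z0 \<times> Z0)"
    using f(1) by (intro reindex(2)) (simp_all add: split_def)
  with g_le show "(\<Sum>\<^sub>\<infinity>q\<in>Q. f q * ?W (j q)) \<le> 2 * Hs_sq s w * (Z0_powr_sum (2 * e - 2))^3"
    by linarith
qed

definition nonres_all :: "(int \<times> int \<times> int \<times> int) set" where
  "nonres_all = {(k1, k2, k3, k4). k1 \<noteq> 0 \<and> k2 \<noteq> 0 \<and> k3 \<noteq> 0 \<and> k4 \<noteq> 0 \<and>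
      (k1 + k2) * (k1 + k3 + k4) * (k2 + k3 + k4) \<noteq> 0}"

lemma nonres_subset_nonres_all: "nonres k \<subseteq> nonres_all"
  by (auto simp: nonres_def nonres_all_def)

lemma disjoint_family_nonres: "disjoint_family_on nonres K"
  by (auto simp: disjoint_family_on_def nonres_def)

definition gain_part :: "real \<Rightarrow> real \<Rightarrow> (int \<Rightarrow> complex) \<Rightarrow> (int \<times> int \<times> int \<times> int \<Rightarrow> real)
    \<Rightarrow> int \<times> int \<times> int \<times> int \<Rightarrow> real" where
  "gain_part s e w m = (\<lambda>(k1, k2, k3, k4).
     \<bar>real_of_int (k1 + k2 + k3 + k4)\<bar> powr (2 * e) * (m (k1, k2, k3, k4))\<^sup>2 * (Hs_weight s w k3)\<^sup>2)"

lemma gain_factor_sq_le: "(gain_factor s e w q)\<^sup>2 \<le> 2 * gain_part s e w mA q + 2 * gain_part s e w mB q"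
proof -
  obtain k1 k2 k3 k4 where q: "q = (k1, k2, k3, k4)" by (cases q)
  define K where "K = \<bar>real_of_int (k1 + k2 + k3 + k4)\<bar> powr (2 * e) * (Hs_weight s w k3)\<^sup>2"
  have "(gain_factor s e w q)\<^sup>2 = K * (mA q + mB q)\<^sup>2"
    by (simp add: q gain_factor_def K_def power_mult_distrib powr_square)
  also have "\<dots> \<le> K * (2 * (mA q)\<^sup>2 + 2 * (mB q)\<^sup>2)"
  proof (rule mult_left_mono)
    have "0 \<le> (mA q - mB q)\<^sup>2" by simp
    then show "(mA q + mB q)\<^sup>2 \<le> 2 * (mA q)\<^sup>2 + 2 * (mB q)\<^sup>2"
      by (simp add: power2_eq_square algebra_simps)
  qed (simp add: K_def)
  also have "\<dots> = 2 * gain_part s e w mA q + 2 * gain_part s e w mB q"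
    by (simp add: q gain_part_def K_def algebra_simps)
  finally show ?thesis .
qed

lemma gain_part_mA_summable:
  assumes w: "in_Hs s w" and e: "0 < e" "e < 1/2"
  shows "gain_part s e w mA summable_on nonres_all"
    and "infsum (gain_part s e w mA) nonres_all \<le> 2 * Hs_sq s w * (Z0_powr_sum (2 * e - 2))^3"
proof -
  define j where "j = (\<lambda>(k1::int, k2::int, k3::int, k4::int). k3)"
  define \<rho> where "\<rho> = (\<lambda>(k1::int, k2::int, k3::int, k4::int). (k1 + k2, k1 + k3 + k4, k2 + k3 + k4))"
  define f where "f = (\<lambda>(k1, k2, k3, k4). \<bar>real_of_int (k1 + k2 + k3 + k4)\<bar> powr (2 * e) * (mA (k1, k2, k3, k4))\<^sup>2)"
  let ?h = "\<lambda>n::int. \<bar>real_of_int n\<bar> powr (2 * e - 2)"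
  have inj: "inj_on (\<lambda>q. (j q, \<rho> q)) nonres_all"
    by (auto simp: inj_on_def j_def \<rho>_def)
  have img: "j ` nonres_all \<subseteq> Z0" "\<rho> ` nonres_all \<subseteq> Z0 \<times> Z0 \<times> Z0"
    by (auto simp: j_def \<rho>_def nonres_all_def Z0_def)
  have f_nonneg: "0 \<le> f q" for q
    by (simp add: f_def split_def)
  have f_le: "f q \<le> 2 * (case \<rho> q of (a, b, c) \<Rightarrow> ?h a * ?h b * ?h c)" if "q \<in> nonres_all" for q
    using that e by (auto simp: \<rho>_def nonres_all_def f_def mA_sq_le simp del: of_int_add)
  have eq: "gain_part s e w mA = (\<lambda>q. f q * (Hs_weight s w (j q))\<^sup>2)"
    by (simp add: fun_eq_iff gain_part_def f_def j_def)
  note triple = summable_on_Hs_weight_times_triple[OF w e inj img f_nonneg f_le]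
  show "gain_part s e w mA summable_on nonres_all"
    and "infsum (gain_part s e w mA) nonres_all \<le> 2 * Hs_sq s w * (Z0_powr_sum (2 * e - 2))^3"
    using triple by (simp_all add: eq)
qed

lemma gain_part_mB_summable:
  assumes w: "in_Hs s w" and e: "0 < e" "e < 1/2"
  shows "gain_part s e w mB summable_on nonres_all"
    and "infsum (gain_part s e w mB) nonres_all \<le> 2 * Hs_sq s w * (Z0_powr_sum (2 * e - 2))^3"
proof -
  define j where "j = (\<lambda>(k1::int, k2::int, k3::int, k4::int). k3)"
  define \<rho> where "\<rho> = (\<lambda>(k1::int, k2::int, k3::int, k4::int). (k1, k1 + k2, k2 + k3 + k4))"
  define f where "f = (\<lambda>(k1, k2, k3, k4). \<bar>real_of_int (k1 + k2 + k3 + k4)\<bar> powr (2 * e) * (mB (k1, k2, k3, k4))\<^sup>2)"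
  let ?h = "\<lambda>n::int. \<bar>real_of_int n\<bar> powr (2 * e - 2)"
  have inj: "inj_on (\<lambda>q. (j q, \<rho> q)) nonres_all"
    by (auto simp: inj_on_def j_def \<rho>_def)
  have img: "j ` nonres_all \<subseteq> Z0" "\<rho> ` nonres_all \<subseteq> Z0 \<times> Z0 \<times> Z0"
    by (auto simp: j_def \<rho>_def nonres_all_def Z0_def)
  have f_nonneg: "0 \<le> f q" for q
    by (simp add: f_def split_def)
  have f_le: "f q \<le> 2 * (case \<rho> q of (a, b, c) \<Rightarrow> ?h a * ?h b * ?h c)" if "q \<in> nonres_all" for q
    using that e by (auto simp: \<rho>_def nonres_all_def f_def mB_sq_le simp del: of_int_add)
  have eq: "gain_part s e w mB = (\<lambda>q. f q * (Hs_weight s w (j q))\<^sup>2)"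
    by (simp add: fun_eq_iff gain_part_def f_def j_def)
  note triple = summable_on_Hs_weight_times_triple[OF w e inj img f_nonneg f_le]
  show "gain_part s e w mB summable_on nonres_all"
    and "infsum (gain_part s e w mB) nonres_all \<le> 2 * Hs_sq s w * (Z0_powr_sum (2 * e - 2))^3"
    using triple by (simp_all add: eq)
qed

lemma gain_factor_sq_summable:
  assumes w: "in_Hs s w" and e: "0 < e" "e < 1/2"
  shows "(\<lambda>q. (gain_factor s e w q)\<^sup>2) summable_on nonres_all"
    and "(\<Sum>\<^sub>\<infinity>q\<in>nonres_all. (gain_factor s e w q)\<^sup>2) \<le> 8 * Hs_sq s w * (Z0_powr_sum (2 * e - 2))^3"
proof -
  note A = gain_part_mA_summable[OF w e] and B = gain_part_mB_summable[OF w e]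
  let ?AB = "\<lambda>q. 2 * gain_part s e w mA q + 2 * gain_part s e w mB q"
  have AB: "?AB summable_on nonres_all"
    using A(1) B(1) by (intro summable_on_add summable_on_cmult_right)
  show "(\<lambda>q. (gain_factor s e w q)\<^sup>2) summable_on nonres_all"
    using AB gain_factor_sq_le by (rule summable_on_comparison_test) simp
  then have "(\<Sum>\<^sub>\<infinity>q\<in>nonres_all. (gain_factor s e w q)\<^sup>2) \<le> infsum ?AB nonres_all"
    using AB gain_factor_sq_le by (rule infsum_mono)
  also have "\<dots> = 2 * infsum (gain_part s e w mA) nonres_all + 2 * infsum (gain_part s e w mB) nonres_all"
    using A(1) B(1) by (simp add: infsum_add summable_on_cmult_right infsum_cmult_right')
  finally show "(\<Sum>\<^sub>\<infinity>q\<in>nonres_all. (gain_factor s e w q)\<^sup>2) \<le> 8 * Hs_sq s w * (Z0_powr_sum (2 * e - 2))^3"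
    using A(2) B(2) by simp
qed

lemma majorant_summable:
  assumes G: "(\<lambda>q. (gain_factor s e w q)\<^sup>2) summable_on nonres k"
    and D: "in_Hs s u" "in_Hs s v" "in_Hs s \<phi>" and k: "k \<in> Z0" and s: "0 \<le> s"
  defines "M \<equiv> \<lambda>q. (mA q + mB q) * amplitude u v w \<phi> q"
  shows "M summable_on nonres k"
    and "\<bar>real_of_int k\<bar> powr (s + e) * infsum M (nonres k)
      \<le> 4 powr s * sqrt ((\<Sum>\<^sub>\<infinity>q\<in>nonres k. (gain_factor s e w q)\<^sup>2) * (Hs_sq s u * Hs_sq s v * Hs_sq s \<phi>))"
proof -
  define c where "c = \<bar>real_of_int k\<bar> powr (s + e)"
  have c: "0 < c" using k by (simp add: c_def Z0_def)
  let ?gd = "\<lambda>q. gain_factor s e w q * data_factor s u v \<phi> q"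
  note data = data_factor_sq_summable[OF D, of k]
  note CS = infsum_Cauchy_Schwarz[OF G _ data(1), OF gain_factor_nonneg data_factor_nonneg]
  have le: "M q \<le> 4 powr s / c * ?gd q" if "q \<in> nonres k" for q
    using majorant_le_gain_data_factor[OF that s, of e u v w \<phi>] c
    by (simp add: M_def c_def field_simps)
  have M_nonneg: "0 \<le> M q" for q
    by (cases q) (simp add: M_def mA_def mB_def amplitude_def)
  have gd: "(\<lambda>q. 4 powr s / c * ?gd q) summable_on nonres k"
    using CS(1) by (rule summable_on_cmult_right)
  show M: "M summable_on nonres k"
    using gd le M_nonneg by (rule summable_on_comparison_test)
  have "c * infsum M (nonres k) \<le> c * (\<Sum>\<^sub>\<infinity>q\<in>nonres k. 4 powr s / c * ?gd q)"
    using c by (intro mult_left_mono infsum_mono[OF M gd le]) simp_all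
  also have "\<dots> = 4 powr s * infsum ?gd (nonres k)"
    using c by (subst infsum_cmult_right') simp
  also have "\<dots> \<le> 4 powr s * sqrt ((\<Sum>\<^sub>\<infinity>q\<in>nonres k. (gain_factor s e w q)\<^sup>2) * (Hs_sq s u * Hs_sq s v * Hs_sq s \<phi>))"
    using data(2)
    by (intro mult_left_mono order_trans[OF CS(2)] real_sqrt_le_mono mult_left_mono infsum_nonneg) simp_all
  finally show "\<bar>real_of_int k\<bar> powr (s + e) * infsum M (nonres k)
      \<le> 4 powr s * sqrt ((\<Sum>\<^sub>\<infinity>q\<in>nonres k. (gain_factor s e w q)\<^sup>2) * (Hs_sq s u * Hs_sq s v * Hs_sq s \<phi>))"
    unfolding c_def .
qed

lemma B4_mode_bound:
  assumes G: "(\<lambda>q. (gain_factor s e w q)\<^sup>2) summable_on nonres k"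
    and D: "in_Hs s u" "in_Hs s v" "in_Hs s \<phi>" and k: "k \<in> Z0" and s: "0 \<le> s"
  shows "B41_term t u v w \<phi> summable_on nonres k" and "B42_term t u v w \<phi> summable_on nonres k"
    and "\<bar>real_of_int k\<bar> powr (s + e) * cmod (B4 t u v w \<phi> k)
      \<le> 3/2 * 4 powr s * sqrt ((\<Sum>\<^sub>\<infinity>q\<in>nonres k. (gain_factor s e w q)\<^sup>2) * (Hs_sq s u * Hs_sq s v * Hs_sq s \<phi>))"
proof -
  let ?M = "\<lambda>q. (mA q + mB q) * amplitude u v w \<phi> q"
  note M = majorant_summable[OF G D k s]
  have "cmod (B41_term t u v w \<phi> q) \<le> ?M q" for q
    unfolding norm_B41_term
    by (rule mult_right_mono) (cases q; simp add: mB_def amplitude_def)+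
  note B41 = summable_on_norm_infsum_le_majorant[OF M(1) this]
  note B42 = summable_on_norm_infsum_le_majorant[OF M(1) norm_B42_term_le[where k = k and t = t]]
  show "B41_term t u v w \<phi> summable_on nonres k" "B42_term t u v w \<phi> summable_on nonres k"
    using B41(1) B42(1) .
  have "cmod (B4 t u v w \<phi> k) \<le> cmod (B41 t u v w \<phi> k) / 2 + cmod (B42 t u v w \<phi> k)"
    unfolding B4_def by (metis norm_divide norm_numeral norm_triangle_ineq)
  also have "\<dots> \<le> 3/2 * infsum ?M (nonres k)"
    using B41(2) B42(2) unfolding B41_def B42_def by linarith
  finally have "\<bar>real_of_int k\<bar> powr (s + e) * cmod (B4 t u v w \<phi> k)
      \<le> \<bar>real_of_int k\<bar> powr (s + e) * (3/2 * infsum ?M (nonres k))"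
    by (rule mult_left_mono) simp
  with M(2) show "\<bar>real_of_int k\<bar> powr (s + e) * cmod (B4 t u v w \<phi> k)
      \<le> 3/2 * 4 powr s * sqrt ((\<Sum>\<^sub>\<infinity>q\<in>nonres k. (gain_factor s e w q)\<^sup>2) * (Hs_sq s u * Hs_sq s v * Hs_sq s \<phi>))"
    by linarith
qed

lemma B4_Hs_sq_le:
  assumes u: "in_Hs s u" and v: "in_Hs s v" and w: "in_Hs s w" and \<phi>: "in_Hs s \<phi>"
    and s: "0 \<le> s" and e: "0 < e" "e < 1/2"
  defines "C \<equiv> (3/2 * 4 powr s)\<^sup>2 * (8 * (Z0_powr_sum (2 * e - 2))^3)"
  shows "in_Hs (s + e) (B4 t u v w \<phi>)"
    and "Hs_sq (s + e) (B4 t u v w \<phi>) \<le> C * (Hs_sq s u * Hs_sq s v * Hs_sq s w * Hs_sq s \<phi>)"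
proof -
  let ?G = "\<lambda>k. \<Sum>\<^sub>\<infinity>q\<in>nonres k. (gain_factor s e w q)\<^sup>2"
  let ?F = "\<lambda>k. \<bar>real_of_int k\<bar> powr (2 * (s + e)) * (cmod (B4 t u v w \<phi> k))\<^sup>2"
  define D where "D = Hs_sq s u * Hs_sq s v * Hs_sq s \<phi>"
  have D: "0 \<le> D" by (simp add: D_def Hs_sq_def infsum_nonneg)
  note gain = gain_factor_sq_summable[OF w e]
  note G = summable_on_infsum_disjoint_family_le[OF gain(1) zero_le_power2 nonres_subset_nonres_all disjoint_family_nonres]
  have le: "?F k \<le> (3/2 * 4 powr s)\<^sup>2 * D * ?G k" if "k \<in> Z0" for k
  proof -
    have "?G k * D \<ge> 0" using D by (simp add: infsum_nonneg)
    have "?F k = (\<bar>real_of_int k\<bar> powr (s + e) * cmod (B4 t u v w \<phi> k))\<^sup>2"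
      by (simp add: power_mult_distrib powr_square)
    also have "\<dots> \<le> (3/2 * 4 powr s * sqrt (?G k * D))\<^sup>2"
      using B4_mode_bound(3)[OF summable_on_subset_banach[OF gain(1) nonres_subset_nonres_all] u v \<phi> that s]
      by (intro power_mono) (simp_all add: D_def)
    also have "\<dots> = (3/2 * 4 powr s)\<^sup>2 * D * ?G k"
      using real_sqrt_pow2[OF \<open>?G k * D \<ge> 0\<close>] by (simp only: power_mult_distrib mult_ac)
    finally show ?thesis .
  qed
  have FG: "(\<lambda>k. (3/2 * 4 powr s)\<^sup>2 * D * ?G k) summable_on Z0"
    using G(1) by (rule summable_on_cmult_right)
  show F: "in_Hs (s + e) (B4 t u v w \<phi>)"
    unfolding in_Hs_def using FG le by (rule summable_on_comparison_test) simp_all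
  have "Hs_sq (s + e) (B4 t u v w \<phi>) \<le> (\<Sum>\<^sub>\<infinity>k\<in>Z0. (3/2 * 4 powr s)\<^sup>2 * D * ?G k)"
    unfolding Hs_sq_def using F[unfolded in_Hs_def] FG le by (rule infsum_mono)
  also have "\<dots> = (3/2 * 4 powr s)\<^sup>2 * D * infsum ?G Z0"
    by (rule infsum_cmult_right')
  also have "\<dots> \<le> (3/2 * 4 powr s)\<^sup>2 * D * (8 * Hs_sq s w * (Z0_powr_sum (2 * e - 2))^3)"
    using order_trans[OF G(2) gain(2)] D by (intro mult_left_mono) simp_all
  finally show "Hs_sq (s + e) (B4 t u v w \<phi>) \<le> C * (Hs_sq s u * Hs_sq s v * Hs_sq s w * Hs_sq s \<phi>)"
    by (simp add: C_def D_def mult_ac)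
qed

lemma B4_Hs_norm_le:
  assumes "in_Hs s u" "in_Hs s v" "in_Hs s w" "in_Hs s \<phi>" "0 \<le> s" "0 < e" "e < 1/2"
  defines "C \<equiv> (3/2 * 4 powr s)\<^sup>2 * (8 * (Z0_powr_sum (2 * e - 2))^3)"
  shows "Hs_norm (s + e) (B4 t u v w \<phi>) \<le> sqrt C * Hs_norm s u * Hs_norm s v * Hs_norm s w * Hs_norm s \<phi>"
proof -
  have "Hs_norm (s + e) (B4 t u v w \<phi>) \<le> sqrt (C * (Hs_sq s u * Hs_sq s v * Hs_sq s w * Hs_sq s \<phi>))"
    unfolding Hs_norm_def C_def using B4_Hs_sq_le(2)[OF assms(1-7)] by (rule real_sqrt_le_mono)
  also have "\<dots> = sqrt C * Hs_norm s u * Hs_norm s v * Hs_norm s w * Hs_norm s \<phi>"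
    by (simp only: Hs_norm_def real_sqrt_mult mult.assoc)
  finally show ?thesis .
qed

lemma B4_terms_summable_on_nonres:
  fixes e :: real
  assumes "in_Hs s u" "in_Hs s v" "in_Hs s w" "in_Hs s \<phi>" "0 \<le> s" "0 < e" "e < 1/2" "k \<in> Z0"
  shows "B41_term t u v w \<phi> summable_on nonres k" and "B42_term t u v w \<phi> summable_on nonres k"
proof -
  have "(\<lambda>q. (gain_factor s e w q)\<^sup>2) summable_on nonres k"
    using gain_factor_sq_summable(1)[OF assms(3,6,7)] nonres_subset_nonres_all
    by (rule summable_on_subset_banach)
  from B4_mode_bound(1,2)[OF this assms(1,2,4,8,5)]
  show "B41_term t u v w \<phi> summable_on nonres k" and "B42_term t u v w \<phi> summable_on nonres k" .
qed

theorem lemma7p13: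
  fixes s \<epsilon> :: real
  assumes "s \<ge> 0" and "0 < \<epsilon>" and "\<epsilon> < 1/2"
  shows "\<exists>c4. \<forall>t u v w \<phi>. in_Hs s u \<and> in_Hs s v \<and> in_Hs s w \<and> in_Hs s \<phi> \<longrightarrow>
           (\<forall>k\<in>Z0. B41_term t u v w \<phi> summable_on nonres k
                  \<and> B42_term t u v w \<phi> summable_on nonres k)
         \<and> in_Hs (s + \<epsilon>) (B4 t u v w \<phi>)
         \<and> Hs_norm (s + \<epsilon>) (B4 t u v w \<phi>)
             \<le> c4 * Hs_norm s u * Hs_norm s v * Hs_norm s w * Hs_norm s \<phi>"
proof (intro exI allI impI conjI ballI)
  fix t u v w \<phi> k
  assume "in_Hs s u \<and> in_Hs s v \<and> in_Hs s w \<and> in_Hs s \<phi>"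
  then have H: "in_Hs s u" "in_Hs s v" "in_Hs s w" "in_Hs s \<phi>" by simp_all
  {
    assume "k \<in> Z0"
    with B4_terms_summable_on_nonres[OF H assms]
    show "B41_term t u v w \<phi> summable_on nonres k" "B42_term t u v w \<phi> summable_on nonres k"
      by blast+
  }
  show "in_Hs (s + \<epsilon>) (B4 t u v w \<phi>)"
    by (rule B4_Hs_sq_le(1)[OF H assms])
  show "Hs_norm (s + \<epsilon>) (B4 t u v w \<phi>)
      \<le> sqrt ((3/2 * 4 powr s)\<^sup>2 * (8 * (Z0_powr_sum (2 * \<epsilon> - 2))^3))
        * Hs_norm s u * Hs_norm s v * Hs_norm s w * Hs_norm s \<phi>"
    by (rule B4_Hs_norm_le[OF H assms])
qed

end
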